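(* Let $G=(\{f_i\},\{c_i\},\{X_i\},W)$ be a networked public goods game (as in the context). Suppose there exist a symmetric matrix $W^0=(w^0_{ij})$ and constants $L_i\ge 0$, $C_i>0$ such that (1) $W^0$ is positive definite with minimal eigenvalue $\sigma_0>0$, and $w^0_{ii}=1$ for all $i$; (2) $c_i'$ is $L_i$-Lipschitz for every $i$; (3) $f_i$ is $C_i$-concave for every $i$; (4) $\sigma_0>\sigma_{\max}(\Sigma)$, where $\Sigma=(\sigma_{ij})$ with $\sigma_{ii}=0$ and, for $i\ne j$, $\sigma_{ij}=\frac{2L_i|w_{ij}|}{C_i}+|w^0_{ij}-w_{ij}|$, and $\sigma_{\max}$ denotes the maximum singular value. Then $G$ has a unique (pure) Nash equilibrium.
   Context: There are $n$ players; player $i$ chooses effort $x_i\in X_i=[\underline{x}_i,\bar{x}_i]$, $X=\prod_iX_i$. $W=(w_{ij})$ is a real $n\times n$ matrix with $w_{ii}=1$. The gain of $i$ is $k_i=\sum_jw_{ij}x_j\in K_i=[\underline{k}_i,\bar{k}_i]$ (min and max over $X$). $f_i:K_i\to\mathbb{R}$ is twice differentiable, concave and strictly increasing; $c_i:X_i\to\mathbb{R}$ is twice differentiable, convex and strictly increasing; utility $u_i(\mathbf{x})=f_i(k_i)-c_i(x_i)$. A Nash equilibrium is $\mathbf{x}\in X$ with $u_i(x_i',\mathbf{x}_{-i})\le u_i(\mathbf{x})$ for all $i$, $x_i'\in X_i$. A differentiable $g$ on an interval is $C$-concave if $g(y)\le g(x)+g'(x)(y-x)-\frac C2(y-x)^2$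 for all $x,y$. *)

theory Defs
  imports "HOL-Analysis.Analysis"
begin

definition strat_set :: "('n::finite \<Rightarrow> real) \<Rightarrow> ('n \<Rightarrow> real) \<Rightarrow> 'n \<Rightarrow> real set" where
  "strat_set lo hi i = {lo i .. hi i}"

definition profile_set :: "('n::finite \<Rightarrow> real) \<Rightarrow> ('n \<Rightarrow> real) \<Rightarrow> (real^'n) set" where
  "profile_set lo hi = {x. \<forall>i. x $ i \<in> strat_set lo hi i}"

definition gain :: "real^'n^'n \<Rightarrow> real^'n \<Rightarrow> 'n::finite \<Rightarrow> real" where
  "gain W x i = (\<Sum>j\<in>UNIV. W $ i $ j * x $ j)"

definition gain_set :: "real^'n^'n \<Rightarrow> ('n::finite \<Rightarrow> real) \<Rightarrow> ('n \<Rightarrow> real) \<Rightarrow> 'n \<Rightarrow> real set" where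
  "gain_set W lo hi i =
     {Inf ((\<lambda>x. gain W x i) ` profile_set lo hi) .. Sup ((\<lambda>x. gain W x i) ` profile_set lo hi)}"

definition utility :: "('n \<Rightarrow> real \<Rightarrow> real) \<Rightarrow> ('n \<Rightarrow> real \<Rightarrow> real) \<Rightarrow> real^'n^'n
    \<Rightarrow> 'n::finite \<Rightarrow> real^'n \<Rightarrow> real" where
  "utility f c W i x = f i (gain W x i) - c i (x $ i)"

definition upd :: "real^'n \<Rightarrow> 'n::finite \<Rightarrow> real \<Rightarrow> real^'n" where
  "upd x i y = (\<chi> j. if j = i then y else x $ j)"

definition nash_equilibrium ::
  "('n \<Rightarrow> real \<Rightarrow> real) \<Rightarrow> ('n \<Rightarrow> real \<Rightarrow> real) \<Rightarrow> real^'n^'n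
    \<Rightarrow> ('n::finite \<Rightarrow> real) \<Rightarrow> ('n \<Rightarrow> real) \<Rightarrow> real^'n \<Rightarrow> bool" where
  "nash_equilibrium f c W lo hi x \<longleftrightarrow>
     x \<in> profile_set lo hi \<and>
     (\<forall>i. \<forall>y \<in> strat_set lo hi i. utility f c W i (upd x i y) \<le> utility f c W i x)"

definition C_concave_on :: "real \<Rightarrow> real set \<Rightarrow> (real \<Rightarrow> real) \<Rightarrow> (real \<Rightarrow> real) \<Rightarrow> bool" where
  "C_concave_on C S g g' \<longleftrightarrow>
     (\<forall>x\<in>S. \<forall>y\<in>S. g y \<le> g x + g' x * (y - x) - C / 2 * (y - x)^2)"

definition is_eigenvalue :: "real^'n^'n \<Rightarrow> real \<Rightarrow> bool" where
  "is_eigenvalue A \<mu> \<longleftrightarrow> (\<exists>v. v \<noteq> 0 \<and> A *v v = \<mu> *\<^sub>R v)"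

definition is_min_eigenvalue :: "real^'n^'n \<Rightarrow> real \<Rightarrow> bool" where
  "is_min_eigenvalue A \<mu> \<longleftrightarrow> is_eigenvalue A \<mu> \<and> (\<forall>\<nu>. is_eigenvalue A \<nu> \<longrightarrow> \<mu> \<le> \<nu>)"

definition pos_def :: "real^'n^'n \<Rightarrow> bool" where
  "pos_def A \<longleftrightarrow> (\<forall>v. v \<noteq> 0 \<longrightarrow> v \<bullet> (A *v v) > 0)"

text \<open>Maximum singular value = operator 2-norm.\<close>
definition sigma_max :: "real^'n^'m \<Rightarrow> real" where
  "sigma_max A = onorm (\<lambda>v. A *v v)"

end

(* Existence: with the marginal utility F_i(x) = f_i'(k_i) - c_i'(x_i), the map
   x \<mapsto> clamp_X (x + F(x)) is a continuous self-map of the box X, so by Brouwer it has a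
   fixed point. A fixed point satisfies the first-order conditions F_i(x) (y - x_i) \<le> 0 for
   all y \<in> X_i, and since u_i is concave in x_i these characterise the Nash equilibria.

   Uniqueness: for equilibria x, y and d = y - x, adding the first-order conditions of both and
   using the strong concavity of f_i and the monotonicity of c_i' gives d_i (W d)_i \<le> 0,
   hence d \<bullet> W d \<le> 0. But d \<bullet> W0 d \<ge> \<sigma>0 |d|^2, and as \<Sigma> dominates |W0 - W| entrywise,
   d \<bullet> (W0 - W) d \<le> |d| \<bullet> \<Sigma> |d| \<le> \<sigma>_max(\<Sigma>) |d|^2. Thus (\<sigma>0 - \<sigma>_max(\<Sigma>)) |d|^2 \<le> 0. *)
theory Submission
  imports Defs
begin

section \<open>Derivatives at the ends of an interval\<close>

lemma DERIV_le_if_right_slopes_le: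
  fixes g :: "real \<Rightarrow> real"
  assumes d: "(g has_real_derivative D) (at c within S)" and cy: "c < y" and sub: "{c..y} \<subseteq> S"
    and slopes: "\<And>z. c < z \<Longrightarrow> z \<le> y \<Longrightarrow> (g z - g c) / (z - c) \<le> M"
  shows "D \<le> M"
proof -
  have "(g has_real_derivative D) (at c within {c..y})" using DERIV_subset[OF d sub] .
  then have lim: "((\<lambda>z. (g z - g c) / (z - c)) \<longlongrightarrow> D) (at_right c)"
    using has_field_derivative_iff at_within_Icc_at_right[OF cy] by metis
  have "eventually (\<lambda>z. (g z - g c) / (z - c) \<le> M) (at_right c)"
    unfolding eventually_at_right_field using cy slopes by (intro exI[of _ y]) auto
  with lim show ?thesis by (rule tendsto_upperbound) simp
qed

lemma DERIV_ge_if_left_slopes_ge: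
  fixes g :: "real \<Rightarrow> real"
  assumes d: "(g has_real_derivative D) (at c within S)" and yc: "y < c" and sub: "{y..c} \<subseteq> S"
    and slopes: "\<And>z. y \<le> z \<Longrightarrow> z < c \<Longrightarrow> M \<le> (g z - g c) / (z - c)"
  shows "M \<le> D"
proof -
  have "(g has_real_derivative D) (at c within {y..c})" using DERIV_subset[OF d sub] .
  then have lim: "((\<lambda>z. (g z - g c) / (z - c)) \<longlongrightarrow> D) (at_left c)"
    using has_field_derivative_iff at_within_Icc_at_left[OF yc] by metis
  have "eventually (\<lambda>z. M \<le> (g z - g c) / (z - c)) (at_left c)"
    unfolding eventually_at_left_field using yc slopes by (intro exI[of _ y]) auto
  with lim show ?thesis by (rule tendsto_lowerbound) simp
qed

lemma DERIV_max_on_Icc_first_order: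
  fixes g :: "real \<Rightarrow> real"
  assumes d: "(g has_real_derivative D) (at c within {a..b})" and c: "c \<in> {a..b}"
    and y: "y \<in> {a..b}" and max: "\<And>z. z \<in> {a..b} \<Longrightarrow> g z \<le> g c"
  shows "D * (y - c) \<le> 0"
proof (cases y c rule: linorder_cases)
  case less
  have "0 \<le> D"
    by (rule DERIV_ge_if_left_slopes_ge[OF d less])
      (use c y max in \<open>auto intro!: divide_nonpos_neg\<close>)
  with less show ?thesis by (simp add: mult_nonneg_nonpos)
next
  case greater
  have "D \<le> 0"
    by (rule DERIV_le_if_right_slopes_le[OF d greater])
      (use c y max in \<open>auto intro!: divide_nonpos_pos\<close>)
  with greater show ?thesis by (simp add: mult_nonpos_nonneg)
qed simp

text \<open>Unlike \<open>convex_on_imp_above_tangent\<close>, the point of tangency may be an endpoint.\<close>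

lemma convex_on_Icc_above_tangent:
  fixes g :: "real \<Rightarrow> real"
  assumes cv: "convex_on {a..b} g" and d: "(g has_real_derivative D) (at c within {a..b})"
    and c: "c \<in> {a..b}" and y: "y \<in> {a..b}"
  shows "g c + D * (y - c) \<le> g y"
proof (cases y c rule: linorder_cases)
  case less
  have "(g y - g c) / (y - c) \<le> D"
  proof (rule DERIV_ge_if_left_slopes_ge[OF d less])
    show "{y..c} \<subseteq> {a..b}" using c y by auto
    fix z assume z: "y \<le> z" "z < c"
    have "convex_on {y..c} g" using cv by (rule convex_on_subset) (use c y in auto)
    then have "g z \<le> (g y - g c) / (c - y) * (c - z) + g c"
      using z by (intro convex_onD_Icc'') auto
    then show "(g y - g c) / (y - c) \<le> (g z - g c) / (z - c)"
      using z less by (simp add: field_split_simps)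
  qed
  with less show ?thesis by (simp add: field_simps)
next
  case greater
  have "D \<le> (g y - g c) / (y - c)"
  proof (rule DERIV_le_if_right_slopes_le[OF d greater])
    show "{c..y} \<subseteq> {a..b}" using c y by auto
    fix z assume z: "c < z" "z \<le> y"
    have "convex_on {c..y} g" using cv by (rule convex_on_subset) (use c y in auto)
    then have "g z \<le> (g y - g c) / (y - c) * (z - c) + g c"
      using z by (intro convex_onD_Icc') auto
    then show "(g z - g c) / (z - c) \<le> (g y - g c) / (y - c)"
      using z greater by (simp add: field_split_simps)
  qed
  with greater show ?thesis by (simp add: field_simps)
qed simp

lemma convex_on_Icc_derivative_monotone:
  fixes g g' :: "real \<Rightarrow> real"
  assumes cv: "convex_on {a..b} g"
    and d: "\<And>t. t \<in> {a..b} \<Longrightarrow> (g has_real_derivative g' t) (at t within {a..b})"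
    and s: "s \<in> {a..b}" and t: "t \<in> {a..b}"
  shows "0 \<le> (g' t - g' s) * (t - s)"
proof -
  have "g s + g' s * (t - s) \<le> g t" by (rule convex_on_Icc_above_tangent[OF cv d[OF s] s t])
  moreover have "g t + g' t * (s - t) \<le> g s" by (rule convex_on_Icc_above_tangent[OF cv d[OF t] t s])
  ultimately show ?thesis by (simp add: algebra_simps)
qed

lemma C_concave_on_derivative_strongly_antimonotone:
  assumes "C_concave_on C S g g'" and "s \<in> S" and "t \<in> S"
  shows "(g' t - g' s) * (t - s) \<le> - C * (t - s)^2"
proof -
  have "g t \<le> g s + g' s * (t - s) - C / 2 * (t - s)^2"
    and "g s \<le> g t + g' t * (s - t) - C / 2 * (s - t)^2"
    using assms unfolding C_concave_on_def by blast+
  then show ?thesis by (simp add: algebra_simps power2_eq_square)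
qed

lemma clamp_fixed_point_first_order:
  fixes a b t m y :: real
  assumes "max a (min b (t + m)) = t" and "a \<le> y" and "y \<le> b"
  shows "m * (y - t) \<le> 0"
  using assms by (auto simp: max_def min_def mult_le_0_iff split: if_splits)

section \<open>Quadratic forms\<close>

lemma linear_coeff_zero_if_quadratic_nonneg:
  fixes b c :: real
  assumes nonneg: "\<And>t. 0 \<le> 2 * t * b + t^2 * c"
  shows "b = 0"
proof (rule ccontr)
  assume "b \<noteq> 0"
  define s where "s = \<bar>c\<bar> + 1"
  have s: "s > 0" by (simp add: s_def add_nonneg_pos)
  have "s^2 * (2 * (-b/s) * b + (-b/s)^2 * c) = b^2 * (c - 2 * s)"
    using s by (simp add: field_simps power2_eq_square)
  also have "\<dots> < 0" using \<open>b \<noteq> 0\<close> by (intro mult_pos_neg) (auto simp: s_def)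
  finally show False using nonneg[of "-b/s"] by (metis zero_le_power2 mult_nonneg_nonneg not_less)
qed

lemma inner_matrix_vector_mult_symmetric:
  fixes A :: "real^'n^'n"
  assumes "transpose A = A"
  shows "a \<bullet> (A *v b) = b \<bullet> (A *v a)"
proof -
  have "a \<bullet> (A *v b) = (a v* A) \<bullet> b" by (simp add: dot_lmul_matrix)
  also have "a v* A = A *v a" using vector_transpose_matrix[of a A] assms by simp
  finally show ?thesis by (simp add: inner_commute)
qed

lemma quadratic_form_min_on_sphere:
  fixes A :: "real^'n^'n"
  obtains u where "u \<bullet> u = 1" and "\<And>v. (u \<bullet> (A *v u)) * (v \<bullet> v) \<le> v \<bullet> (A *v v)"
proof -
  have cont: "continuous_on (sphere 0 1) (\<lambda>w::real^'n. w \<bullet> (A *v w))"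
    by (intro continuous_intros)
  obtain u where u: "u \<in> sphere (0::real^'n) 1"
    and min: "\<And>w. w \<in> sphere 0 1 \<Longrightarrow> u \<bullet> (A *v u) \<le> w \<bullet> (A *v w)"
    using continuous_attains_inf[OF compact_sphere _ cont] by fastforce
  have "u \<bullet> u = 1" using u by (simp add: dot_square_norm)
  moreover have "(u \<bullet> (A *v u)) * (v \<bullet> v) \<le> v \<bullet> (A *v v)" for v
  proof (cases "v = 0")
    case False
    define w where "w = (1 / norm v) *\<^sub>R v"
    have nv: "norm v > 0" using False by simp
    have "w \<in> sphere 0 1" using nv by (simp add: w_def)
    then have "u \<bullet> (A *v u) \<le> w \<bullet> (A *v w)" by (rule min)
    also have "w \<bullet> (A *v w) = (v \<bullet> (A *v v)) / (norm v)^2"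
      by (simp add: w_def matrix_vector_mult_scaleR power2_eq_square)
    finally have "(u \<bullet> (A *v u)) * (norm v)^2 \<le> v \<bullet> (A *v v)" using nv by (simp add: le_divide_eq)
    then show ?thesis by (simp add: power2_norm_eq_inner)
  qed simp
  ultimately show ?thesis by (rule that)
qed

lemma quadratic_form_minimizer_is_eigenvector:
  fixes A :: "real^'n^'n"
  assumes sym: "transpose A = A" and uu: "u \<bullet> u = 1"
    and min: "\<And>v. (u \<bullet> (A *v u)) * (v \<bullet> v) \<le> v \<bullet> (A *v v)"
  shows "A *v u = (u \<bullet> (A *v u)) *\<^sub>R u"
proof -
  define m where "m = u \<bullet> (A *v u)"
  define w where "w = A *v u - m *\<^sub>R u"
  \<comment> \<open>The minimality along the line \<open>u + t w\<close> is \<open>0 \<le> 2 t |w|^2 + O(t^2)\<close>, forcing \<open>w = 0\<close>.\<close>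
  have "0 \<le> 2 * t * (w \<bullet> w) + t^2 * (w \<bullet> (A *v w) - m * (w \<bullet> w))" for t
  proof -
    have Aw: "w \<bullet> (A *v u) = u \<bullet> (A *v w)" by (rule inner_matrix_vector_mult_symmetric[OF sym])
    have ww: "w \<bullet> w = w \<bullet> (A *v u) - m * (w \<bullet> u)"
      by (simp add: w_def inner_commute algebra_simps)
    have e1: "(u + t *\<^sub>R w) \<bullet> (u + t *\<^sub>R w) = 1 + 2 * t * (u \<bullet> w) + t^2 * (w \<bullet> w)"
      using uu by (simp add: inner_commute power2_eq_square algebra_simps)
    have e2: "(u + t *\<^sub>R w) \<bullet> (A *v (u + t *\<^sub>R w))
        = m + 2 * t * (w \<bullet> (A *v u)) + t^2 * (w \<bullet> (A *v w))"
      using Aw by (simp add: m_def power2_eq_square algebra_simps)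
    show ?thesis
      using min[of "u + t *\<^sub>R w", folded m_def] unfolding e1 e2 ww
      by (simp add: inner_commute algebra_simps)
  qed
  then have "w \<bullet> w = 0" by (rule linear_coeff_zero_if_quadratic_nonneg)
  then show ?thesis by (simp add: w_def m_def)
qed

lemma min_eigenvalue_le_quadratic_form:
  fixes A :: "real^'n^'n"
  assumes sym: "transpose A = A" and eig: "is_min_eigenvalue A \<sigma>"
  shows "\<sigma> * (v \<bullet> v) \<le> v \<bullet> (A *v v)"
proof -
  obtain u where uu: "u \<bullet> u = 1" and min: "\<And>v. (u \<bullet> (A *v u)) * (v \<bullet> v) \<le> v \<bullet> (A *v v)"
    using quadratic_form_min_on_sphere[of A] by blast
  have "u \<noteq> 0" using uu by auto
  then have "is_eigenvalue A (u \<bullet> (A *v u))"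
    unfolding is_eigenvalue_def
    using quadratic_form_minimizer_is_eigenvector[OF sym uu min] by blast
  then have "\<sigma> \<le> u \<bullet> (A *v u)" using eig by (simp add: is_min_eigenvalue_def)
  then have "\<sigma> * (v \<bullet> v) \<le> (u \<bullet> (A *v u)) * (v \<bullet> v)" by (simp add: mult_right_mono)
  also have "\<dots> \<le> v \<bullet> (A *v v)" by (rule min)
  finally show ?thesis .
qed

lemma quadratic_form_le_sigma_max:
  fixes A S :: "real^'n^'n"
  assumes dom: "\<And>i j. \<bar>A $ i $ j\<bar> \<le> S $ i $ j"
  shows "d \<bullet> (A *v d) \<le> sigma_max S * (d \<bullet> d)"
proof -
  define e where "e = (\<chi> i. \<bar>d $ i\<bar>)"
  have "d \<bullet> (A *v d) = (\<Sum>i\<in>UNIV. \<Sum>j\<in>UNIV. d $ i * A $ i $ j * d $ j)"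
    by (simp add: inner_vec_def matrix_vector_mult_def sum_distrib_left mult.assoc)
  also have "\<dots> \<le> (\<Sum>i\<in>UNIV. \<Sum>j\<in>UNIV. e $ i * S $ i $ j * e $ j)"
  proof (intro sum_mono)
    fix i j
    have "d $ i * A $ i $ j * d $ j \<le> e $ i * \<bar>A $ i $ j\<bar> * e $ j"
      by (simp add: e_def flip: abs_mult)
    also have "\<dots> \<le> e $ i * S $ i $ j * e $ j"
      using dom by (intro mult_right_mono mult_left_mono) (auto simp: e_def)
    finally show "d $ i * A $ i $ j * d $ j \<le> e $ i * S $ i $ j * e $ j" .
  qed
  also have "\<dots> = e \<bullet> (S *v e)"
    by (simp add: inner_vec_def matrix_vector_mult_def sum_distrib_left mult.assoc)
  also have "\<dots> \<le> norm e * norm (S *v e)" by (rule norm_cauchy_schwarz)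
  also have "\<dots> \<le> norm e * (sigma_max S * norm e)"
    unfolding sigma_max_def by (intro mult_left_mono onorm) auto
  also have "\<dots> = sigma_max S * (d \<bullet> d)"
    by (simp add: e_def norm_vec_def power2_norm_eq_inner[symmetric] power2_eq_square)
  finally show ?thesis .
qed

lemma quadratic_form_nonpos_imp_zero:
  fixes W W0 S :: "real^'n^'n"
  assumes sym: "transpose W0 = W0" and eig: "is_min_eigenvalue W0 \<sigma>0"
    and dom: "\<And>i j. \<bar>W0 $ i $ j - W $ i $ j\<bar> \<le> S $ i $ j" and gap: "sigma_max S < \<sigma>0"
    and nonpos: "d \<bullet> (W *v d) \<le> 0"
  shows "d = 0"
proof -
  have "\<sigma>0 * (d \<bullet> d) \<le> d \<bullet> (W0 *v d)" by (rule min_eigenvalue_le_quadratic_form[OF sym eig])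
  also have "\<dots> = d \<bullet> (W *v d) + d \<bullet> ((W0 - W) *v d)"
    by (simp add: matrix_vector_mult_diff_rdistrib inner_diff_right)
  also have "\<dots> \<le> sigma_max S * (d \<bullet> d)"
    using nonpos quadratic_form_le_sigma_max[of "W0 - W" S d] dom by simp
  finally have "(\<sigma>0 - sigma_max S) * (d \<bullet> d) \<le> 0" by (simp add: algebra_simps)
  with gap have "d \<bullet> d \<le> 0" by (simp add: mult_le_0_iff)
  then show ?thesis using inner_ge_zero[of d] by simp
qed

section \<open>Networked public goods games\<close>

lemma profile_set_eq_cbox: "profile_set lo hi = cbox (\<chi> i. lo i) (\<chi> i. hi i)"
  by (auto simp: profile_set_def strat_set_def mem_box_cart)

lemma gain_mem_gain_set:
  assumes "x \<in> profile_set lo hi"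
  shows "gain W x i \<in> gain_set W lo hi i"
proof -
  have "bounded ((\<lambda>x. gain W x i) ` profile_set lo hi)"
    unfolding profile_set_eq_cbox gain_def
    by (intro compact_imp_bounded compact_continuous_image continuous_intros compact_cbox)
  with assms show ?thesis
    unfolding gain_set_def
    by (auto intro!: cInf_lower cSup_upper bounded_imp_bdd_below bounded_imp_bdd_above)
qed

lemma upd_mem_profile_set:
  "x \<in> profile_set lo hi \<Longrightarrow> y \<in> strat_set lo hi i \<Longrightarrow> upd x i y \<in> profile_set lo hi"
  by (auto simp: profile_set_def upd_def)

lemma upd_nth_self [simp]: "upd x i (x $ i) = x"
  by (simp add: upd_def vec_eq_iff)

lemma gain_upd:
  assumes "W $ i $ i = 1"
  shows "gain W (upd x i y) i = gain W x i + (y - x $ i)"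
proof -
  have "(\<Sum>j\<in>UNIV. W $ i $ j * upd x i y $ j) =
        (\<Sum>j\<in>UNIV. W $ i $ j * x $ j + (if j = i then W $ i $ j * (y - x $ i) else 0))"
    by (intro sum.cong) (auto simp: upd_def algebra_simps)
  then show ?thesis by (simp add: gain_def sum.distrib assms)
qed

lemma gain_diff: "gain W y i - gain W x i = (W *v (y - x)) $ i"
  by (simp add: matrix_vector_mult_def gain_def sum_subtractf algebra_simps)

locale public_goods_game =
  fixes lo hi :: "'n::finite \<Rightarrow> real" and W :: "real^'n^'n"
    and f f' c c' :: "'n \<Rightarrow> real \<Rightarrow> real" and C :: "'n \<Rightarrow> real"
  assumes interval: "lo i \<le> hi i"
    and W_diag: "W $ i $ i = 1"
    and f_deriv: "k \<in> gain_set W lo hi i \<Longrightarrow>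
      (f i has_real_derivative f' i k) (at k within gain_set W lo hi i)"
    and f'_continuous: "continuous_on (gain_set W lo hi i) (f' i)"
    and c_deriv: "t \<in> strat_set lo hi i \<Longrightarrow>
      (c i has_real_derivative c' i t) (at t within strat_set lo hi i)"
    and c'_continuous: "continuous_on (strat_set lo hi i) (c' i)"
    and c_convex: "convex_on (strat_set lo hi i) (c i)"
    and C_pos: "C i > 0"
    and f_C_concave: "C_concave_on (C i) (gain_set W lo hi i) (f i) (f' i)"
begin

definition marginal_utility :: "'n \<Rightarrow> real^'n \<Rightarrow> real" where
  "marginal_utility i x = f' i (gain W x i) - c' i (x $ i)"

lemma utility_upd: "utility f c W i (upd x i y) = f i (gain W x i + (y - x $ i)) - c i y"
  unfolding utility_def gain_upd[OF W_diag] by (simp add: upd_def)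

lemma utility_upd_has_derivative:
  assumes x: "x \<in> profile_set lo hi"
  shows "((\<lambda>y. utility f c W i (upd x i y)) has_real_derivative marginal_utility i x)
           (at (x $ i) within strat_set lo hi i)"
proof -
  let ?k = "\<lambda>y. gain W x i + (y - x $ i)"
  have xi: "x $ i \<in> strat_set lo hi i" using x by (simp add: profile_set_def)
  have "?k ` strat_set lo hi i \<subseteq> gain_set W lo hi i"
    using gain_mem_gain_set[OF upd_mem_profile_set[OF x]] by (auto simp flip: gain_upd[OF W_diag])
  from DERIV_subset[OF f_deriv[OF gain_mem_gain_set[OF x]] this]
  have "(f i has_real_derivative f' i (gain W x i)) (at (?k (x $ i)) within ?k ` strat_set lo hi i)"
    by simp
  moreover have "(?k has_real_derivative 1) (at (x $ i) within strat_set lo hi i)"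
    by (auto intro!: derivative_eq_intros)
  ultimately have "((\<lambda>y. f i (?k y)) has_real_derivative f' i (gain W x i))
      (at (x $ i) within strat_set lo hi i)"
    using DERIV_image_chain by (fastforce simp: comp_def)
  from DERIV_diff[OF this c_deriv[OF xi]] show ?thesis
    by (simp add: utility_upd marginal_utility_def)
qed

lemma nash_equilibrium_iff_first_order:
  "nash_equilibrium f c W lo hi x \<longleftrightarrow> x \<in> profile_set lo hi \<and>
     (\<forall>i. \<forall>y\<in>strat_set lo hi i. marginal_utility i x * (y - x $ i) \<le> 0)"
proof safe
  assume ne: "nash_equilibrium f c W lo hi x"
  then show x: "x \<in> profile_set lo hi" by (simp add: nash_equilibrium_def)
  fix i y assume "y \<in> strat_set lo hi i"
  then show "marginal_utility i x * (y - x $ i) \<le> 0"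
    using utility_upd_has_derivative[OF x, of i] x ne
    by (intro DERIV_max_on_Icc_first_order[where g = "\<lambda>y. utility f c W i (upd x i y)"])
      (auto simp: nash_equilibrium_def profile_set_def strat_set_def)
next
  assume x: "x \<in> profile_set lo hi"
    and first_order: "\<forall>i. \<forall>y\<in>strat_set lo hi i. marginal_utility i x * (y - x $ i) \<le> 0"
  have "utility f c W i (upd x i y) \<le> utility f c W i x" if y: "y \<in> strat_set lo hi i" for i y
  proof -
    have xi: "x $ i \<in> strat_set lo hi i" using x by (simp add: profile_set_def)
    have "gain W x i + (y - x $ i) \<in> gain_set W lo hi i"
      using gain_mem_gain_set[OF upd_mem_profile_set[OF x y], of W i]
      by (simp add: gain_upd[OF W_diag])
    then have "f i (gain W x i + (y - x $ i))
        \<le> f i (gain W x i) + f' i (gain W x i) * (y - x $ i) - C i / 2 * (y - x $ i)^2"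
      using f_C_concave[of i] gain_mem_gain_set[OF x, of W i] unfolding C_concave_on_def by fastforce
    moreover have "0 \<le> C i / 2 * (y - x $ i)^2" using C_pos[of i] by simp
    moreover have "c i (x $ i) + c' i (x $ i) * (y - x $ i) \<le> c i y"
      using convex_on_Icc_above_tangent c_convex[of i] c_deriv[OF xi] xi y
      by (simp add: strat_set_def)
    moreover have "marginal_utility i x * (y - x $ i) \<le> 0" using first_order y by blast
    ultimately show ?thesis
      unfolding utility_upd by (simp add: utility_def marginal_utility_def algebra_simps)
  qed
  with x show "nash_equilibrium f c W lo hi x" by (simp add: nash_equilibrium_def)
qed

lemma nash_equilibrium_exists: "\<exists>x. nash_equilibrium f c W lo hi x"
proof -
  define T where "T x = (\<chi> i. max (lo i) (min (hi i) (x $ i + marginal_utility i x)))" for x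
  have "continuous_on (profile_set lo hi) (marginal_utility i)" for i
  proof -
    have "continuous_on (profile_set lo hi) (\<lambda>x. gain W x i)"
      unfolding gain_def by (intro continuous_intros)
    then have f'_gain: "continuous_on (profile_set lo hi) (\<lambda>x. f' i (gain W x i))"
      by (rule continuous_on_compose2[OF f'_continuous[of i]]) (auto intro: gain_mem_gain_set)
    have "continuous_on (profile_set lo hi) (\<lambda>x. x $ i)"
      by (intro continuous_intros)
    then have c'_nth: "continuous_on (profile_set lo hi) (\<lambda>x. c' i (x $ i))"
      by (rule continuous_on_compose2[OF c'_continuous[of i]]) (auto simp: profile_set_def)
    show ?thesis unfolding marginal_utility_def by (rule continuous_on_diff[OF f'_gain c'_nth])
  qed
  then have "continuous_on (profile_set lo hi) T"
    unfolding T_def by (intro continuous_on_vec_lambda continuous_intros)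
  moreover have "T \<in> profile_set lo hi \<rightarrow> profile_set lo hi"
    using interval by (auto simp: T_def profile_set_def strat_set_def)
  moreover have "(\<chi> i. lo i) \<in> profile_set lo hi"
    using interval by (simp add: profile_set_def strat_set_def)
  ultimately obtain x where x: "x \<in> profile_set lo hi" and fixed: "T x = x"
    using brouwer[of "profile_set lo hi" T] unfolding profile_set_eq_cbox
    by (metis compact_cbox convex_box(1) empty_iff)
  have "marginal_utility i x * (y - x $ i) \<le> 0" if "y \<in> strat_set lo hi i" for i y
    using fixed that
    by (intro clamp_fixed_point_first_order[of "lo i" "hi i"]) (auto simp: T_def vec_eq_iff strat_set_def)
  with x show ?thesis by (auto simp: nash_equilibrium_iff_first_order)
qed

lemma nash_equilibria_quadratic_form_nonpos:
  assumes x: "nash_equilibrium f c W lo hi x" and y: "nash_equilibrium f c W lo hi y"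
  shows "(y - x) \<bullet> (W *v (y - x)) \<le> 0"
proof -
  have "(y - x) $ i * (W *v (y - x)) $ i \<le> 0" for i
  proof -
    have xP: "x \<in> profile_set lo hi" and yP: "y \<in> profile_set lo hi"
      using x y by (simp_all add: nash_equilibrium_def)
    then have xi: "x $ i \<in> strat_set lo hi i" and yi: "y $ i \<in> strat_set lo hi i"
      by (simp_all add: profile_set_def)
    define D where "D = y $ i - x $ i"
    define \<Delta> where "\<Delta> = gain W y i - gain W x i"
    define A where "A = f' i (gain W x i) - f' i (gain W y i)"
    define B where "B = c' i (y $ i) - c' i (x $ i)"
    have A\<Delta>: "C i * \<Delta>^2 \<le> A * \<Delta>"
      using C_concave_on_derivative_strongly_antimonotone[OF f_C_concave
          gain_mem_gain_set[OF xP] gain_mem_gain_set[OF yP]]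
      by (simp add: A_def \<Delta>_def algebra_simps)
    have BD: "0 \<le> B * D"
      using convex_on_Icc_derivative_monotone[of "lo i" "hi i" "c i" "c' i"] c_convex c_deriv xi yi
      by (simp add: B_def D_def strat_set_def)
    have "D * (A + B) \<le> 0"
      using x y xi yi unfolding nash_equilibrium_iff_first_order
      by (fastforce simp: marginal_utility_def A_def B_def D_def algebra_simps)
    with BD have DA: "D * A \<le> 0" by (simp add: algebra_simps)
    \<comment> \<open>\<open>A\<close> has the sign of \<open>\<Delta>\<close> and, by \<open>DA\<close>, the opposite sign of \<open>D\<close>.\<close>
    have "D * \<Delta> \<le> 0"
    proof (rule ccontr)
      assume "\<not> D * \<Delta> \<le> 0"
      then have pos: "0 < D * \<Delta>" and "\<Delta> \<noteq> 0" by auto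
      then have "0 < A * \<Delta>" using A\<Delta> C_pos[of i] by (smt (verit) zero_less_power2 mult_pos_pos)
      with pos have "0 < (D * A) * (\<Delta> * \<Delta>)"
        by (metis mult_pos_pos mult.assoc mult.left_commute)
      then show False using mult_nonpos_nonneg[OF DA zero_le_square[of \<Delta>]] by linarith
    qed
    then show ?thesis by (simp add: D_def \<Delta>_def gain_diff)
  qed
  then show ?thesis unfolding inner_vec_def by (simp add: sum_nonpos)
qed

end

theorem theorem3p8:
  fixes lo hi :: "'n::finite \<Rightarrow> real"
    and W W0 :: "real^'n^'n"
    and f f' f'' c c' c'' :: "'n \<Rightarrow> real \<Rightarrow> real"
    and L C :: "'n \<Rightarrow> real"
    and \<sigma>0 :: real
  assumes interval: "\<And>i. lo i \<le> hi i"
    and W_diag: "\<And>i. W $ i $ i = 1"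
    and f_d1: "\<And>i k. k \<in> gain_set W lo hi i \<Longrightarrow>
                 (f i has_real_derivative f' i k) (at k within gain_set W lo hi i)"
    and f_d2: "\<And>i k. k \<in> gain_set W lo hi i \<Longrightarrow>
                 (f' i has_real_derivative f'' i k) (at k within gain_set W lo hi i)"
    and f_concave: "\<And>i. concave_on (gain_set W lo hi i) (f i)"
    and f_incr: "\<And>i. strict_mono_on (gain_set W lo hi i) (f i)"
    and c_d1: "\<And>i t. t \<in> strat_set lo hi i \<Longrightarrow>
                 (c i has_real_derivative c' i t) (at t within strat_set lo hi i)"
    and c_d2: "\<And>i t. t \<in> strat_set lo hi i \<Longrightarrow>
                 (c' i has_real_derivative c'' i t) (at t within strat_set lo hi i)"
    and c_convex: "\<And>i. convex_on (strat_set lo hi i) (c i)"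
    and c_incr: "\<And>i. strict_mono_on (strat_set lo hi i) (c i)"
    and L_nonneg: "\<And>i. L i \<ge> 0"
    and C_pos: "\<And>i. C i > 0"
    and W0_sym: "transpose W0 = W0"
    and W0_pd: "pos_def W0"
    and W0_min_eig: "is_min_eigenvalue W0 \<sigma>0"
    and \<sigma>0_pos: "\<sigma>0 > 0"
    and W0_diag: "\<And>i. W0 $ i $ i = 1"
    and c'_lip: "\<And>i. lipschitz_on (L i) (strat_set lo hi i) (c' i)"
    and f_Cconc: "\<And>i. C_concave_on (C i) (gain_set W lo hi i) (f i) (f' i)"
    and spectral: "\<sigma>0 > sigma_max (\<chi> i j. if i = j then 0
                      else 2 * L i * \<bar>W $ i $ j\<bar> / C i + \<bar>W0 $ i $ j - W $ i $ j\<bar>)"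
  shows "\<exists>!x. nash_equilibrium f c W lo hi x"
proof -
  interpret public_goods_game lo hi W f f' c c' C
  proof
    fix i
    show "continuous_on (gain_set W lo hi i) (f' i)"
      using DERIV_continuous[OF f_d2] by (simp add: continuous_on_eq_continuous_within)
    show "continuous_on (strat_set lo hi i) (c' i)"
      using DERIV_continuous[OF c_d2] by (simp add: continuous_on_eq_continuous_within)
  qed (use interval W_diag f_d1 c_d1 c_convex C_pos f_Cconc in auto)
  define \<Sigma> :: "real^'n^'n" where "\<Sigma> = (\<chi> i j. if i = j then 0
                      else 2 * L i * \<bar>W $ i $ j\<bar> / C i + \<bar>W0 $ i $ j - W $ i $ j\<bar>)"
  have dom: "\<bar>W0 $ i $ j - W $ i $ j\<bar> \<le> \<Sigma> $ i $ j" for i j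
    using W_diag W0_diag L_nonneg[of i] C_pos[of i] by (simp add: \<Sigma>_def)
  show ?thesis
  proof (rule ex_ex1I)
    show "\<exists>x. nash_equilibrium f c W lo hi x" by (rule nash_equilibrium_exists)
  next
    fix x y
    assume "nash_equilibrium f c W lo hi x" and "nash_equilibrium f c W lo hi y"
    then have "y - x = 0"
      by (intro quadratic_form_nonpos_imp_zero[OF W0_sym W0_min_eig dom spectral[folded \<Sigma>_def]]
          nash_equilibria_quadratic_form_nonpos)
    then show "x = y" by simp
  qed
qed

end
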